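(* Let $F$ be a CNF formula and let $\pi$ be a refutation of $F$ (a derivation $\pi$ from $F$ using instructions $\mathrm{del}$, $\mathrm{rup}$, $\mathrm{sr}$, $\mathrm{wsr}$ with $\vdash_\bot\mathrm{acc}(F,\pi)$). Then $\mathcal{T}(F,\pi):F\triangleright\{\bot\}$, i.e.\ the proof term $\mathcal{T}(F,\pi)$ derives the dynamic formula $\{[\,].\bot\}$ from the dynamic formula $\{[\,].C:C\in F\}$.
   Context: CNF setting: literals $x,\neg x,\top,\bot$ with complements; substitutions $\sigma$ on literals with $\sigma(\top)=\top$, $\sigma(\overline l)=\overline{\sigma(l)}$ (finite if identity on almost all variables); $(I\circ\sigma)(x)=1$ iff $I\vDash\sigma(x)$. Static constraints are clauses $l_1\vee\dots\vee l_n$ and cubes $l_1\wedge\dots\wedge l_n$, negated by De Morgan duality (swapping $\vee,\wedge$ and complementing literals), with reducts applying $\sigma$ literalwise; $\bot$ denotes the unit clause $\bot$. A CNF formula is a finite set of static constraints. Conflict detection $\vdash_\bot F$ is unit propagation: with $U(F)$ the least set of literals containing $\top$, all literals of cubes in $F$, and $l_i$ whenever $l_1\vee\dots\vee l_n\in F$ and $\overline{l_j}\in U(F)$ for all $j\ne i$, $\vdash_\bot F$ holds iff $\bot\in U(F)$, or $x,\neg x\in U(F)$ for some variable $x$, or some clause of $F$ has all its literals' complements in $U(F)$. RUP/SR/WSR: $C$ is RUP over $F$ if $\vdash_\bot F\cup\{\overline C\}$; SR over $F$ upon $\sigma$ if $\vdash_\bot\{\overline{C[\sigma]}\}$ and $\vdash_\bot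 F\cup\{\overline C,\overline{D[\sigma]}\}$ for all $D\in F$; WSR over $F$ upon $\sigma$ modulo $G$ if $\vdash_\bot F\cup\{\overline C,\overline{D[\sigma]}\}$ for all $D\in(F\setminus G)\cup\{C\}$. Accumulated formula: $\mathrm{acc}(F,[\,])=F$; $\mathrm{del}(C)$ removes $C$; $\mathrm{rup}(C)$, $\mathrm{sr}(C,\sigma)$ add $C$; $\mathrm{wsr}(C,\sigma,G)$ removes $G$ then adds $C$. A derivation from $F$ is an instruction list where each $\mathrm{rup}$/$\mathrm{sr}$/$\mathrm{wsr}$ instruction's clause is RUP/SR upon $\sigma$/WSR upon $\sigma$ modulo $G$ over the accumulated formula before it ($\mathrm{del}$ always allowed). Programs, dynamic constraints/formulas, $\vdash_{\mathrm{dyn}}$, and proof terms with the relation $\pi:\varGamma\triangleright\varDelta$ are as follows. Program items: $\langle\sigma\rangle$, $T?$, $\varepsilon_1\sqcup\varepsilon_2$, $\mathrm{if}\ T\ \mathrm{then}\ \varepsilon_1\parallel\varepsilon_0$ (semantics: $J=I\circ\sigma$; $I\vDash T$ and $J=I$; either; as $\varepsilon_1$ if $I\vDash T$ else as $\varepsilon_0$); programs are lists of items with sequential composition; $\mathrm{if}\ T\ \mathrm{then}\ \varepsilon$ abbreviates $\mathrm{if}\ T\ \mathrm{then}\ \varepsilon\parallel[\,]$. $\varepsilon.C$ holds at $I$ iff $J\vDash C$ whenever $I\otimes J\vDash\varepsilon$; $\delta.(\varepsilon.C)=(\delta\varepsilon).C$; $\varepsilon.G=\{\varepsilon.C:C\in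 G\}$; static $C$ identified with $[\,].C$. $\varGamma@\varepsilon=\{\varPhi:\varepsilon.\varPhi\in\varGamma\}$, $\varGamma{\downarrow}=\{[\,].C\in\varGamma\}$. Reduct of a dynamic constraint: $\varPhi[\sigma]$ with $I\vDash\varPhi[\sigma]$ iff $I\circ\sigma\vDash\varPhi$ and $([\,].C)[\sigma]=[\,].C[\sigma]$. $\varGamma\vdash_{\mathrm{dyn}}\varPhi$ iff $\varGamma\Rightarrow\varPhi$ reduces by the rules (N1) $\varGamma\Rightarrow\langle\sigma\rangle.\varPhi\mapsto\varGamma\Rightarrow\varPhi[\sigma]$; (N2) $\varGamma\Rightarrow(\varepsilon_1\sqcup\varepsilon_2).\varPhi\mapsto\varGamma\Rightarrow\varepsilon_1.\varPhi$, $\varGamma\Rightarrow\varepsilon_2.\varPhi$; (N3) $\varGamma\Rightarrow T?.\varPhi\mapsto\varGamma\cup\{T\}\Rightarrow\varPhi$; (N4) $\varGamma\Rightarrow(\mathrm{if}\ T\ \mathrm{then}\ \varepsilon_1\parallel\varepsilon_0).\varPhi\mapsto\varGamma\cup\{T\}\Rightarrow\varepsilon_1.\varPhi$, $\varGamma\cup\{\overline T\}\Rightarrow\varepsilon_0.\varPhi$; (P1) $\varGamma\cup\langle\sigma\rangle.\varDelta\Rightarrow\varPhi\mapsto\varGamma\cup\varDelta[\sigma]\Rightarrow\varPhi$; (P2) $\varGamma\cup(\varepsilon_1\sqcup\varepsilon_2).\varDelta\Rightarrow\varPhi\mapsto\varGamma\cup\varepsilon_1.\varDelta\cup\varepsilon_2.\varDelta\Rightarrow\varPhi$;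 (P3) $\varGamma\cup T?.\varDelta\Rightarrow\varPhi\mapsto\varGamma\cup\varDelta\cup\{T\}\Rightarrow\varPhi$, $\varGamma\cup\{\overline T\}\Rightarrow\varPhi$; (P4) $\varGamma\cup(\mathrm{if}\ T\ \mathrm{then}\ \varepsilon_1\parallel\varepsilon_0).\varDelta\Rightarrow\varPhi\mapsto\varGamma\cup\varepsilon_1.\varDelta\cup\{T\}\Rightarrow\varPhi$, $\varGamma\cup\varepsilon_0.\varDelta\cup\{\overline T\}\Rightarrow\varPhi$, to implications $[\,].F_i\Rightarrow[\,].C_i$ with only empty contexts and $\vdash_\bot F_i\cup\{\overline{C_i}\}$ for all $i$. Proof terms: $\mathrm{qed}$, $\mathrm{elim}\,\pi$, $\mathrm{lem}(\varTheta,\rho)\,\pi$, $\mathrm{ctx}(\varepsilon,\rho)\,\pi$, with: $\mathrm{qed}:\varGamma\triangleright\varDelta$ iff $\varGamma{\downarrow}\vdash_{\mathrm{dyn}}\varPhi$ for all $\varPhi\in\varDelta$; $\mathrm{elim}\,\pi:\varGamma\triangleright\varDelta$ iff $\varGamma\vdash_{\mathrm{dyn}}\varPhi$ for all $\varPhi\in\varDelta{\downarrow}$ and $\pi:\varGamma\cup\varDelta{\downarrow}\triangleright\varDelta\setminus\varDelta{\downarrow}$; $\mathrm{lem}(\varTheta,\rho)\,\pi:\varGamma\triangleright\varDelta$ iff $\rho:\varGamma\triangleright\varTheta$ and $\pi:\varGamma\cup\varTheta\triangleright\varDelta\setminus\varTheta$; $\mathrm{ctx}(\varepsilon,\rho)\,\pi:\varGamma\triangleright\varDelta$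 iff $\rho:\varGamma@\varepsilon\triangleright\varDelta@\varepsilon$ and $\pi:\varGamma\cup\varepsilon.(\varDelta@\varepsilon)\triangleright\varDelta\setminus\varepsilon.(\varDelta@\varepsilon)$. Translation $\mathcal{T}$ (processing instructions from the front): $\mathcal{T}(F,[\,])=\mathrm{qed}$; $\mathcal{T}(F,\mathrm{rup}(C)\,\pi)=\mathrm{lem}(\{C\},\mathrm{qed})\,\mathcal{T}(F\cup\{C\},\pi)$; $\mathcal{T}(F,\mathrm{del}(C)\,\pi)=\mathcal{T}(F\setminus\{C\},\pi)$; $\mathcal{T}(F,\mathrm{sr}(C,\sigma)\,\pi)$ and $\mathcal{T}(F,\mathrm{wsr}(C,\sigma,G)\,\pi)$ both equal $\mathrm{lem}\big(\{\varepsilon.\bot\},\ \mathrm{lem}(\varepsilon.F',\mathrm{qed})\ \mathrm{ctx}(\varepsilon,\mathcal{T}(F',\pi))\ \mathrm{qed}\big)\ \mathrm{elim}\ \mathrm{qed}$, where $\varepsilon=\mathrm{if}\ \overline C\ \mathrm{then}\ \langle\sigma\rangle$ and $F'=F\cup\{C\}$ in the $\mathrm{sr}$ case, $F'=(F\setminus G)\cup\{C\}$ in the $\mathrm{wsr}$ case. *)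

theory Defs
  imports Main
begin

datatype 'v lit = Pos 'v | Neg 'v | LTop | LBot

fun lcompl :: "'v lit \<Rightarrow> 'v lit" where
  "lcompl (Pos x) = Neg x"
| "lcompl (Neg x) = Pos x"
| "lcompl LTop = LBot"
| "lcompl LBot = LTop"

type_synonym 'v subst = "'v \<Rightarrow> 'v lit"

fun slit :: "'v subst \<Rightarrow> 'v lit \<Rightarrow> 'v lit" where
  "slit \<sigma> (Pos x) = \<sigma> x"
| "slit \<sigma> (Neg x) = lcompl (\<sigma> x)"
| "slit \<sigma> LTop = LTop"
| "slit \<sigma> LBot = LBot"

text \<open>Composition used for reducts: (I o sigma) o tau = I o (scomp sigma tau).\<close>
definition scomp :: "'v subst \<Rightarrow> 'v subst \<Rightarrow> 'v subst" where
  "scomp \<sigma> \<tau> = (\<lambda>x. slit \<sigma> (\<tau> x))"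

datatype 'v constr = Clause "'v lit list" | Cube "'v lit list"

fun cneg :: "'v constr \<Rightarrow> 'v constr" where
  "cneg (Clause ls) = Cube (map lcompl ls)"
| "cneg (Cube ls) = Clause (map lcompl ls)"

fun csubst :: "'v constr \<Rightarrow> 'v subst \<Rightarrow> 'v constr" where
  "csubst (Clause ls) \<sigma> = Clause (map (slit \<sigma>) ls)"
| "csubst (Cube ls) \<sigma> = Cube (map (slit \<sigma>) ls)"

fun is_clause :: "'v constr \<Rightarrow> bool" where
  "is_clause (Clause _) = True"
| "is_clause (Cube _) = False"

definition botc :: "'v constr" where
  "botc = Clause [LBot]"

inductive_set UP :: "'v constr set \<Rightarrow> 'v lit set" for F where
  top: "LTop \<in> UP F"
| cube: "Cube ls \<in> F \<Longrightarrow> l \<in> set ls \<Longrightarrow> l \<in> UP F"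
| clause: "Clause ls \<in> F \<Longrightarrow> i < length ls \<Longrightarrow>
     (\<forall>j < length ls. j \<noteq> i \<longrightarrow> lcompl (ls ! j) \<in> UP F) \<Longrightarrow> ls ! i \<in> UP F"

definition conflict :: "'v constr set \<Rightarrow> bool" where
  "conflict F \<longleftrightarrow> LBot \<in> UP F
     \<or> (\<exists>x. Pos x \<in> UP F \<and> Neg x \<in> UP F)
     \<or> (\<exists>ls. Clause ls \<in> F \<and> (\<forall>l \<in> set ls. lcompl l \<in> UP F))"

definition rup :: "'v constr set \<Rightarrow> 'v constr \<Rightarrow> bool" where
  "rup F C \<longleftrightarrow> conflict (insert (cneg C) F)"

definition sr :: "'v constr set \<Rightarrow> 'v constr \<Rightarrow> 'v subst \<Rightarrow> bool" where
  "sr F C \<sigma> \<longleftrightarrow> conflict {cneg (csubst C \<sigma>)}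
     \<and> (\<forall>D \<in> F. conflict (F \<union> {cneg C, cneg (csubst D \<sigma>)}))"

definition wsr :: "'v constr set \<Rightarrow> 'v constr \<Rightarrow> 'v subst \<Rightarrow> 'v constr set \<Rightarrow> bool" where
  "wsr F C \<sigma> G \<longleftrightarrow>
     (\<forall>D \<in> (F - G) \<union> {C}. conflict (F \<union> {cneg C, cneg (csubst D \<sigma>)}))"

datatype 'v instr =
    Del "'v constr"
  | Rup "'v constr"
  | Sr "'v constr" "'v subst"
  | Wsr "'v constr" "'v subst" "'v constr set"

fun accf :: "'v constr set \<Rightarrow> 'v instr list \<Rightarrow> 'v constr set" where
  "accf F [] = F"
| "accf F (Del C # \<pi>) = accf (F - {C}) \<pi>"
| "accf F (Rup C # \<pi>) = accf (insert C F) \<pi>"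
| "accf F (Sr C \<sigma> # \<pi>) = accf (insert C F) \<pi>"
| "accf F (Wsr C \<sigma> G # \<pi>) = accf (insert C (F - G)) \<pi>"

fun derivation :: "'v constr set \<Rightarrow> 'v instr list \<Rightarrow> bool" where
  "derivation F [] = True"
| "derivation F (Del C # \<pi>) = derivation (F - {C}) \<pi>"
| "derivation F (Rup C # \<pi>) =
     (is_clause C \<and> rup F C \<and> derivation (insert C F) \<pi>)"
| "derivation F (Sr C \<sigma> # \<pi>) =
     (is_clause C \<and> sr F C \<sigma> \<and> derivation (insert C F) \<pi>)"
| "derivation F (Wsr C \<sigma> G # \<pi>) =
     (is_clause C \<and> wsr F C \<sigma> G \<and> derivation (insert C (F - G)) \<pi>)"

datatype 'v item =
    Subst "'v subst"
  | Test "'v constr"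
  | Choice "'v item list" "'v item list"
  | IfTE "'v constr" "'v item list" "'v item list"

text \<open>A dynamic constraint eps.C; since delta.(eps.C) = (delta eps).C it is a pair of a
  program (item list) and a static constraint; static C is Dyn [] C.\<close>
datatype 'v dyn = Dyn "'v item list" "'v constr"

fun dstatic :: "'v dyn \<Rightarrow> bool" where
  "dstatic (Dyn \<epsilon> C) = (\<epsilon> = [])"

definition dpre :: "'v item list \<Rightarrow> 'v dyn set \<Rightarrow> 'v dyn set" where
  "dpre \<epsilon> \<Gamma> = (\<lambda>\<Phi>. case \<Phi> of Dyn \<delta> C \<Rightarrow> Dyn (\<epsilon> @ \<delta>) C) ` \<Gamma>"

definition stat :: "'v constr set \<Rightarrow> 'v dyn set" where
  "stat F = Dyn [] ` F"

definition down :: "'v dyn set \<Rightarrow> 'v dyn set" where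
  "down \<Gamma> = {\<Phi> \<in> \<Gamma>. dstatic \<Phi>}"

definition dat :: "'v dyn set \<Rightarrow> 'v item list \<Rightarrow> 'v dyn set" where
  "dat \<Gamma> \<epsilon> = {Dyn \<delta> C | \<delta> C. Dyn (\<epsilon> @ \<delta>) C \<in> \<Gamma>}"

text \<open>Semantically I |= (red sigma eps).C iff (I o sigma) |= eps.C.\<close>
function (sequential) red :: "'v subst \<Rightarrow> 'v item list \<Rightarrow> 'v item list" where
  "red \<sigma> [] = [Subst \<sigma>]"
| "red \<sigma> (Subst \<tau> # \<epsilon>) = Subst (scomp \<sigma> \<tau>) # \<epsilon>"
| "red \<sigma> (Test T # \<epsilon>) = Test (csubst T \<sigma>) # red \<sigma> \<epsilon>"
| "red \<sigma> (Choice \<epsilon>1 \<epsilon>2 # \<epsilon>) = [Choice (red \<sigma> (\<epsilon>1 @ \<epsilon>)) (red \<sigma> (\<epsilon>2 @ \<epsilon>))]"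
| "red \<sigma> (IfTE T \<epsilon>1 \<epsilon>0 # \<epsilon>) =
     [IfTE (csubst T \<sigma>) (red \<sigma> (\<epsilon>1 @ \<epsilon>)) (red \<sigma> (\<epsilon>0 @ \<epsilon>))]"
  by pat_completeness auto
termination
  by (relation "measure (\<lambda>(\<sigma>, \<epsilon>). size_list size \<epsilon>)") auto

fun dred :: "'v subst \<Rightarrow> 'v dyn \<Rightarrow> 'v dyn" where
  "dred \<sigma> (Dyn \<epsilon> C) = (if \<epsilon> = [] then Dyn [] (csubst C \<sigma>) else Dyn (red \<sigma> \<epsilon>) C)"

text \<open>Gamma |-dyn Phi: Gamma => Phi reduces by rules N1-N4, P1-P4 to implications with
  only static constraints whose leaves are unit-propagation conflicts.\<close>
inductive dynd :: "'v dyn set \<Rightarrow> 'v dyn \<Rightarrow> bool" where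
  leaf: "(\<forall>\<Psi> \<in> \<Gamma>. dstatic \<Psi>) \<Longrightarrow> conflict (insert (cneg C) {D. Dyn [] D \<in> \<Gamma>})
          \<Longrightarrow> dynd \<Gamma> (Dyn [] C)"
| N1: "dynd \<Gamma> (dred \<sigma> (Dyn \<epsilon> C)) \<Longrightarrow> dynd \<Gamma> (Dyn (Subst \<sigma> # \<epsilon>) C)"
| N2: "dynd \<Gamma> (Dyn (\<epsilon>1 @ \<epsilon>) C) \<Longrightarrow> dynd \<Gamma> (Dyn (\<epsilon>2 @ \<epsilon>) C)
        \<Longrightarrow> dynd \<Gamma> (Dyn (Choice \<epsilon>1 \<epsilon>2 # \<epsilon>) C)"
| N3: "dynd (insert (Dyn [] T) \<Gamma>) (Dyn \<epsilon> C) \<Longrightarrow> dynd \<Gamma> (Dyn (Test T # \<epsilon>) C)"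
| N4: "dynd (insert (Dyn [] T) \<Gamma>) (Dyn (\<epsilon>1 @ \<epsilon>) C)
        \<Longrightarrow> dynd (insert (Dyn [] (cneg T)) \<Gamma>) (Dyn (\<epsilon>0 @ \<epsilon>) C)
        \<Longrightarrow> dynd \<Gamma> (Dyn (IfTE T \<epsilon>1 \<epsilon>0 # \<epsilon>) C)"
| P1: "\<Delta> \<noteq> {} \<Longrightarrow> dynd (\<Gamma> \<union> dred \<sigma> ` \<Delta>) \<Phi>
        \<Longrightarrow> dynd (\<Gamma> \<union> dpre [Subst \<sigma>] \<Delta>) \<Phi>"
| P2: "\<Delta> \<noteq> {} \<Longrightarrow> dynd (\<Gamma> \<union> dpre \<epsilon>1 \<Delta> \<union> dpre \<epsilon>2 \<Delta>) \<Phi>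
        \<Longrightarrow> dynd (\<Gamma> \<union> dpre [Choice \<epsilon>1 \<epsilon>2] \<Delta>) \<Phi>"
| P3: "\<Delta> \<noteq> {} \<Longrightarrow> dynd (\<Gamma> \<union> \<Delta> \<union> {Dyn [] T}) \<Phi>
        \<Longrightarrow> dynd (\<Gamma> \<union> {Dyn [] (cneg T)}) \<Phi>
        \<Longrightarrow> dynd (\<Gamma> \<union> dpre [Test T] \<Delta>) \<Phi>"
| P4: "\<Delta> \<noteq> {} \<Longrightarrow> dynd (\<Gamma> \<union> dpre \<epsilon>1 \<Delta> \<union> {Dyn [] T}) \<Phi>
        \<Longrightarrow> dynd (\<Gamma> \<union> dpre \<epsilon>0 \<Delta> \<union> {Dyn [] (cneg T)}) \<Phi>
        \<Longrightarrow> dynd (\<Gamma> \<union> dpre [IfTE T \<epsilon>1 \<epsilon>0] \<Delta>) \<Phi>"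

datatype 'v pterm =
    Qed
  | Elim "'v pterm"
  | Lem "'v dyn set" "'v pterm" "'v pterm"
  | Ctx "'v item list" "'v pterm" "'v pterm"

text \<open>derives pi Gamma Delta  stands for  pi : Gamma |> Delta.\<close>
fun derives :: "'v pterm \<Rightarrow> 'v dyn set \<Rightarrow> 'v dyn set \<Rightarrow> bool" where
  "derives Qed \<Gamma> \<Delta> = (\<forall>\<Phi> \<in> \<Delta>. dynd (down \<Gamma>) \<Phi>)"
| "derives (Elim \<pi>) \<Gamma> \<Delta> =
     ((\<forall>\<Phi> \<in> down \<Delta>. dynd \<Gamma> \<Phi>) \<and> derives \<pi> (\<Gamma> \<union> down \<Delta>) (\<Delta> - down \<Delta>))"
| "derives (Lem \<Theta> \<rho> \<pi>) \<Gamma> \<Delta> = (derives \<rho> \<Gamma> \<Theta> \<and> derives \<pi> (\<Gamma> \<union> \<Theta>) (\<Delta> - \<Theta>))"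
| "derives (Ctx \<epsilon> \<rho> \<pi>) \<Gamma> \<Delta> =
     (derives \<rho> (dat \<Gamma> \<epsilon>) (dat \<Delta> \<epsilon>)
      \<and> derives \<pi> (\<Gamma> \<union> dpre \<epsilon> (dat \<Delta> \<epsilon>)) (\<Delta> - dpre \<epsilon> (dat \<Delta> \<epsilon>)))"

definition srprog :: "'v constr \<Rightarrow> 'v subst \<Rightarrow> 'v item list" where
  "srprog C \<sigma> = [IfTE (cneg C) [Subst \<sigma>] []]"

fun translate :: "'v constr set \<Rightarrow> 'v instr list \<Rightarrow> 'v pterm" where
  "translate F [] = Qed"
| "translate F (Rup C # \<pi>) = Lem {Dyn [] C} Qed (translate (insert C F) \<pi>)"
| "translate F (Del C # \<pi>) = translate (F - {C}) \<pi>"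
| "translate F (Sr C \<sigma> # \<pi>) =
     (let \<epsilon> = srprog C \<sigma>; F' = insert C F in
      Lem {Dyn \<epsilon> botc} (Lem (dpre \<epsilon> (stat F')) Qed (Ctx \<epsilon> (translate F' \<pi>) Qed)) (Elim Qed))"
| "translate F (Wsr C \<sigma> G # \<pi>) =
     (let \<epsilon> = srprog C \<sigma>; F' = insert C (F - G) in
      Lem {Dyn \<epsilon> botc} (Lem (dpre \<epsilon> (stat F')) Qed (Ctx \<epsilon> (translate F' \<pi>) Qed)) (Elim Qed))"

end

theory Submission
  imports Defs
begin

text \<open>The translation is checked instruction by instruction against the invariant that the
  remaining proof term refutes the current accumulated formula in every static context
  containing it. A RUP step is a leaf of unit propagation. For an SR or WSR step with
  \<open>\<epsilon> = if \<not>C then \<langle>\<sigma>\<rangle>\<close>, every \<open>\<epsilon>.D\<close> with \<open>D \<in> F'\<close> holds: when \<open>\<not>C\<close> the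
  redundancy condition propagates to \<open>D[\<sigma>]\<close>, and otherwise \<open>D \<in> F \<union> {C}\<close> holds already.
  Hence the rest of the proof, run in context \<open>\<epsilon>\<close>, yields \<open>\<epsilon>.\<bottom>\<close>, which is contradictory
  because \<open>\<epsilon>\<close> always has a run.\<close>

lemma UP_mono: "l \<in> UP F \<Longrightarrow> F \<subseteq> G \<Longrightarrow> l \<in> UP G"
  by (induction rule: UP.induct) (blast intro: UP.intros)+

lemma conflict_mono: "conflict F \<Longrightarrow> F \<subseteq> G \<Longrightarrow> conflict G"
  unfolding conflict_def using UP_mono by blast

lemma lcompl_lcompl [simp]: "lcompl (lcompl l) = l"
  by (cases l) auto

lemma cneg_cneg [simp]: "cneg (cneg C) = C"
  by (cases C) (auto simp: comp_def)

lemma conflict_cneg: "C \<in> F \<Longrightarrow> cneg C \<in> F \<Longrightarrow> conflict F"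
proof (cases C)
  case (Clause ls)
  assume "C \<in> F" "cneg C \<in> F"
  then have "\<forall>l \<in> set ls. lcompl l \<in> UP F"
    using Clause by (auto intro: UP.cube)
  with \<open>C \<in> F\<close> show ?thesis
    using Clause unfolding conflict_def by blast
next
  case (Cube ls)
  assume "C \<in> F" "cneg C \<in> F"
  then have "\<forall>l \<in> set (map lcompl ls). lcompl l \<in> UP F"
    using Cube by (auto intro: UP.cube)
  moreover have "Clause (map lcompl ls) \<in> F"
    using \<open>cneg C \<in> F\<close> Cube by simp
  ultimately show ?thesis
    unfolding conflict_def by blast
qed

lemma conflict_botc: "botc \<in> F \<Longrightarrow> conflict F"
  using UP.top[of F] unfolding conflict_def botc_def by fastforce

abbreviation all_static :: "'v dyn set \<Rightarrow> bool" where
  "all_static \<Gamma> \<equiv> \<forall>\<Psi> \<in> \<Gamma>. dstatic \<Psi>"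

lemma all_static_stat: "all_static (stat F)"
  unfolding stat_def by auto

lemma down_all_static: "all_static \<Gamma> \<Longrightarrow> down \<Gamma> = \<Gamma>"
  unfolding down_def by auto

lemma derives_Qed_all_static:
  "all_static \<Gamma> \<Longrightarrow> derives Qed \<Gamma> \<Delta> \<longleftrightarrow> (\<forall>\<Phi> \<in> \<Delta>. dynd \<Gamma> \<Phi>)"
  by (simp add: down_all_static)

lemma dynd_static_conflict:
  assumes "all_static \<Gamma>" "stat F \<subseteq> \<Gamma>" "conflict (insert (cneg C) F)"
  shows "dynd \<Gamma> (Dyn [] C)"
proof (rule dynd.leaf)
  have "F \<subseteq> {D. Dyn [] D \<in> \<Gamma>}"
    using \<open>stat F \<subseteq> \<Gamma>\<close> unfolding stat_def by auto
  then show "conflict (insert (cneg C) {D. Dyn [] D \<in> \<Gamma>})"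
    using conflict_mono[OF assms(3)] by blast
qed (use assms in blast)

lemma dynd_srprog_botc:
  assumes "all_static \<Gamma>"
  shows "dynd (insert (Dyn (srprog C \<sigma>) botc) \<Gamma>) (Dyn [] botc)"
proof -
  have then_branch: "dynd (\<Gamma> \<union> dpre [Subst \<sigma>] {Dyn [] botc} \<union> {Dyn [] (cneg C)}) (Dyn [] botc)"
  proof -
    have "dynd ((\<Gamma> \<union> {Dyn [] (cneg C)}) \<union> dred \<sigma> ` {Dyn [] botc}) (Dyn [] botc)"
      by (rule dynd_static_conflict[where F = "{botc}"])
        (use assms in \<open>auto simp: stat_def botc_def intro: conflict_botc\<close>)
    then have "dynd ((\<Gamma> \<union> {Dyn [] (cneg C)}) \<union> dpre [Subst \<sigma>] {Dyn [] botc}) (Dyn [] botc)"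
      by (intro dynd.P1) auto
    then show ?thesis
      by (simp add: Un_ac)
  qed
  have else_branch: "dynd (\<Gamma> \<union> dpre [] {Dyn [] botc} \<union> {Dyn [] (cneg (cneg C))}) (Dyn [] botc)"
    by (rule dynd_static_conflict[where F = "{botc}"])
      (use assms in \<open>auto simp: stat_def dpre_def intro: conflict_botc\<close>)
  have "insert (Dyn (srprog C \<sigma>) botc) \<Gamma> = \<Gamma> \<union> dpre [IfTE (cneg C) [Subst \<sigma>] []] {Dyn [] botc}"
    unfolding srprog_def dpre_def by auto
  then show ?thesis
    using dynd.P4[OF _ then_branch else_branch] by simp
qed

lemma dynd_srprog_redundant:
  assumes "all_static \<Gamma>" "stat F \<subseteq> \<Gamma>" "D \<in> insert C F"
    and redundant: "conflict (F \<union> {cneg C, cneg (csubst D \<sigma>)})"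
  shows "dynd \<Gamma> (Dyn (srprog C \<sigma>) D)"
proof -
  have "stat (insert (cneg C) F) \<subseteq> insert (Dyn [] (cneg C)) \<Gamma>"
    using assms(2) unfolding stat_def by auto
  then have "dynd (insert (Dyn [] (cneg C)) \<Gamma>) (Dyn [] (csubst D \<sigma>))"
    using assms(1) redundant
    by (intro dynd_static_conflict[where F = "insert (cneg C) F"]) (auto simp: insert_commute)
  then have then_branch: "dynd (insert (Dyn [] (cneg C)) \<Gamma>) (Dyn [Subst \<sigma>] D)"
    by (intro dynd.N1) simp
  have "stat (insert C F) \<subseteq> insert (Dyn [] (cneg (cneg C))) \<Gamma>"
    using assms(2) unfolding stat_def by auto
  moreover have "conflict (insert (cneg D) (insert C F))"
    using \<open>D \<in> insert C F\<close> by (intro conflict_cneg[of D]) auto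
  ultimately have else_branch: "dynd (insert (Dyn [] (cneg (cneg C))) \<Gamma>) (Dyn [] D)"
    using assms(1) by (intro dynd_static_conflict[where F = "insert C F"]) auto
  show ?thesis
    unfolding srprog_def
    using dynd.N4[of "cneg C" \<Gamma> "[Subst \<sigma>]" "[]" D "[]"] then_branch else_branch by simp
qed

lemma dat_Un: "dat (\<Gamma> \<union> \<Gamma>') \<epsilon> = dat \<Gamma> \<epsilon> \<union> dat \<Gamma>' \<epsilon>"
  unfolding dat_def by auto

lemma Dyn_append_in_dpre: "Dyn (\<epsilon> @ \<delta>) C \<in> dpre \<epsilon> \<Delta> \<longleftrightarrow> Dyn \<delta> C \<in> \<Delta>"
proof
  assume "Dyn (\<epsilon> @ \<delta>) C \<in> dpre \<epsilon> \<Delta>"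
  then obtain \<Phi> where "\<Phi> \<in> \<Delta>" "Dyn (\<epsilon> @ \<delta>) C = (case \<Phi> of Dyn \<delta> C \<Rightarrow> Dyn (\<epsilon> @ \<delta>) C)"
    unfolding dpre_def by blast
  then show "Dyn \<delta> C \<in> \<Delta>"
    by (cases \<Phi>) simp
qed (force simp: dpre_def)

lemma dat_dpre: "dat (dpre \<epsilon> \<Delta>) \<epsilon> = \<Delta>"
  unfolding dat_def Dyn_append_in_dpre by auto (metis dyn.exhaust)

lemma dat_all_static: "\<epsilon> \<noteq> [] \<Longrightarrow> all_static \<Gamma> \<Longrightarrow> dat \<Gamma> \<epsilon> = {}"
  unfolding dat_def by auto

text \<open>Contexts grow as lemmas are added, and the goal \<open>{\<bottom>}\<close> shrinks to \<open>{}\<close> once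
  \<open>\<bottom>\<close> itself becomes a lemma (a RUP step of \<open>\<bottom>\<close>, or \<open>\<bottom> \<in> F'\<close> in a redundancy step).\<close>
definition refutes :: "'v pterm \<Rightarrow> 'v constr set \<Rightarrow> bool" where
  "refutes P F \<longleftrightarrow>
     (\<forall>\<Gamma> \<Delta>. all_static \<Gamma> \<longrightarrow> stat F \<subseteq> \<Gamma> \<longrightarrow> \<Delta> \<subseteq> {Dyn [] botc} \<longrightarrow> derives P \<Gamma> \<Delta>)"

lemma refutesD:
  "refutes P F \<Longrightarrow> all_static \<Gamma> \<Longrightarrow> stat F \<subseteq> \<Gamma> \<Longrightarrow> \<Delta> \<subseteq> {Dyn [] botc} \<Longrightarrow> derives P \<Gamma> \<Delta>"
  unfolding refutes_def by blast

lemma refutes_Qed: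
  assumes "conflict F"
  shows "refutes Qed F"
  unfolding refutes_def
proof (intro allI impI)
  fix \<Gamma> \<Delta> :: "'a dyn set"
  assume \<Gamma>: "all_static \<Gamma>" "stat F \<subseteq> \<Gamma>" and \<Delta>: "\<Delta> \<subseteq> {Dyn [] botc}"
  have "dynd \<Gamma> (Dyn [] botc)"
    using \<Gamma> conflict_mono[OF assms subset_insertI] by (rule dynd_static_conflict)
  then show "derives Qed \<Gamma> \<Delta>"
    unfolding derives_Qed_all_static[OF \<Gamma>(1)] using \<Delta> by blast
qed

lemma refutes_anti_mono: "refutes P F' \<Longrightarrow> F' \<subseteq> F \<Longrightarrow> refutes P F"
  unfolding refutes_def stat_def by (meson image_mono subset_trans)

lemma refutes_rup:
  assumes "rup F C" "refutes P (insert C F)"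
  shows "refutes (Lem {Dyn [] C} Qed P) F"
  unfolding refutes_def
proof (intro allI impI)
  fix \<Gamma> \<Delta> :: "'a dyn set"
  assume \<Gamma>: "all_static \<Gamma>" "stat F \<subseteq> \<Gamma>" and \<Delta>: "\<Delta> \<subseteq> {Dyn [] botc}"
  have "dynd \<Gamma> (Dyn [] C)"
    using \<Gamma> \<open>rup F C\<close> unfolding rup_def by (rule dynd_static_conflict)
  moreover have "derives P (\<Gamma> \<union> {Dyn [] C}) (\<Delta> - {Dyn [] C})"
  proof (rule refutesD[OF \<open>refutes P (insert C F)\<close>])
    show "all_static (\<Gamma> \<union> {Dyn [] C})"
      using \<Gamma>(1) by simp
    show "stat (insert C F) \<subseteq> \<Gamma> \<union> {Dyn [] C}"
      using \<Gamma>(2) by (auto simp: stat_def)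
    show "\<Delta> - {Dyn [] C} \<subseteq> {Dyn [] botc}"
      using \<Delta> by blast
  qed
  ultimately show "derives (Lem {Dyn [] C} Qed P) \<Gamma> \<Delta>"
    unfolding derives.simps(3) derives_Qed_all_static[OF \<Gamma>(1)] by simp
qed

lemma refutes_redundant:
  assumes "F' \<subseteq> insert C F"
    and redundant: "\<forall>D \<in> F'. conflict (F \<union> {cneg C, cneg (csubst D \<sigma>)})"
    and "refutes P F'"
  shows "refutes (Lem {Dyn (srprog C \<sigma>) botc}
                    (Lem (dpre (srprog C \<sigma>) (stat F')) Qed (Ctx (srprog C \<sigma>) P Qed))
                    (Elim Qed)) F"
  unfolding refutes_def
proof (intro allI impI)
  fix \<Gamma> \<Delta> :: "'a dyn set"
  assume \<Gamma>: "all_static \<Gamma>" "stat F \<subseteq> \<Gamma>" and \<Delta>: "\<Delta> \<subseteq> {Dyn [] botc}"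
  let ?\<epsilon> = "srprog C \<sigma>"
  let ?\<Theta> = "dpre ?\<epsilon> (stat F')"
  let ?\<Delta>' = "{Dyn ?\<epsilon> botc} - ?\<Theta>"
  have \<epsilon>: "?\<epsilon> \<noteq> []"
    by (simp add: srprog_def)
  have "dynd \<Gamma> (Dyn ?\<epsilon> D)" if "D \<in> F'" for D
    using \<Gamma> assms(1) redundant that by (intro dynd_srprog_redundant) auto
  then have \<Theta>_holds: "derives Qed \<Gamma> ?\<Theta>"
    using \<Gamma>(1) by (auto simp: down_all_static dpre_def stat_def)
  have "dat (\<Gamma> \<union> ?\<Theta>) ?\<epsilon> = stat F'"
    using \<epsilon> \<Gamma>(1) by (simp add: dat_Un dat_dpre dat_all_static)
  moreover have "dat ?\<Delta>' ?\<epsilon> \<subseteq> {Dyn [] botc}"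
    unfolding dat_def by auto
  ultimately have "derives P (dat (\<Gamma> \<union> ?\<Theta>) ?\<epsilon>) (dat ?\<Delta>' ?\<epsilon>)"
    using refutesD[OF \<open>refutes P F'\<close> all_static_stat subset_refl] by simp
  moreover have rest: "?\<Delta>' - dpre ?\<epsilon> (dat ?\<Delta>' ?\<epsilon>) = {}"
    unfolding dat_def dpre_def by auto
  ultimately have in_context: "derives (Ctx ?\<epsilon> P Qed) (\<Gamma> \<union> ?\<Theta>) ?\<Delta>'"
    by (simp only: derives.simps rest) simp
  have "\<Delta> - {Dyn ?\<epsilon> botc} = \<Delta>" "down \<Delta> = \<Delta>"
    using \<Delta> \<epsilon> by (auto simp: down_def)
  moreover have "\<forall>\<Phi> \<in> \<Delta>. dynd (\<Gamma> \<union> {Dyn ?\<epsilon> botc}) \<Phi>"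
    using \<Delta> dynd_srprog_botc[OF \<Gamma>(1)] by auto
  ultimately have elim: "derives (Elim Qed) (\<Gamma> \<union> {Dyn ?\<epsilon> botc}) (\<Delta> - {Dyn ?\<epsilon> botc})"
    by simp
  show "derives (Lem {Dyn ?\<epsilon> botc} (Lem ?\<Theta> Qed (Ctx ?\<epsilon> P Qed)) (Elim Qed)) \<Gamma> \<Delta>"
    unfolding derives.simps(3) using \<Theta>_holds in_context elim by blast
qed

lemma sr_redundant:
  "sr F C \<sigma> \<Longrightarrow> \<forall>D \<in> insert C F. conflict (F \<union> {cneg C, cneg (csubst D \<sigma>)})"
  unfolding sr_def by (auto elim: conflict_mono)

lemma wsr_redundant:
  "wsr F C \<sigma> G \<Longrightarrow> \<forall>D \<in> insert C (F - G). conflict (F \<union> {cneg C, cneg (csubst D \<sigma>)})"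
  unfolding wsr_def by auto

lemma refutes_translate: "derivation F \<pi> \<Longrightarrow> conflict (accf F \<pi>) \<Longrightarrow> refutes (translate F \<pi>) F"
proof (induction F \<pi> rule: derivation.induct)
  case (1 F)
  then show ?case by (simp add: refutes_Qed)
next
  case (2 F C \<pi>)
  then show ?case by (auto intro: refutes_anti_mono)
next
  case (3 F C \<pi>)
  then show ?case by (simp add: refutes_rup)
next
  case (4 F C \<sigma> \<pi>)
  then have "sr F C \<sigma>" "refutes (translate (insert C F) \<pi>) (insert C F)"
    by auto
  then show ?case
    by (simp add: Let_def refutes_redundant[OF subset_refl sr_redundant])
next
  case (5 F C \<sigma> G \<pi>)
  then have "wsr F C \<sigma> G" "refutes (translate (insert C (F - G)) \<pi>) (insert C (F - G))"
    by auto
  moreover have "insert C (F - G) \<subseteq> insert C F"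
    by blast
  ultimately show ?case
    by (simp add: Let_def refutes_redundant[OF _ wsr_redundant])
qed

theorem mainTheorem6:
  fixes F :: "'v constr set" and \<pi> :: "'v instr list"
  assumes "finite F"
    and "derivation F \<pi>"
    and "conflict (accf F \<pi>)"
  shows "derives (translate F \<pi>) (stat F) {Dyn [] botc}"
  using refutesD[OF refutes_translate[OF assms(2,3)] all_static_stat] by simp

end
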